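(* Let $k>1$, let $F=F(a_1,\dots,a_k)$ and $A_{2k}=\{a_1^{\pm1},\dots,a_k^{\pm1}\}$. Let $c\ge 1$ and let $Z$ be the set of all cyclically reduced words $x$ over $A_{2k}$ such that \[ C_{2k}(x)\ge -\frac{c}{2}+|x|\frac{\log_2(2k-1)}{2}. \] Then there exists $n_0>1$ such that for every $n\ge n_0$, \[ \frac{\gamma(n,Z)}{\gamma(n,CR)}\ge 1-\frac{1}{2^c}. \]
   Context: $CR$ denotes the set of all cyclically reduced words over $A_{2k}$ (viewed as elements of $F$), and for $S\subseteq F$, $\gamma(n,S)$ is the number of $x\in S$ with $|x|=n$. Kolmogorov complexity: fix a universal Turing machine computing a universal partial recursive function $\phi:\{0,1\}^\ast\to\{0,1\}^\ast$, and for $x\in\{0,1\}^\ast$ let $C(x)=\min\{|p|:\phi(p)=x\}$. Fix a recursive bijection $h:A_{2k}^\ast\to\{0,1\}^\ast$ and for $x\in A_{2k}^\ast$ let $C_{2k}(x)=C(h(x))$. *)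

theory Defs
  imports Complex_Main
begin

text \<open>Letters of A_2k: a pair (i, b) stands for a_(i+1) if b = True and its inverse
  if b = False; only i < k is allowed.\<close>
type_synonym letter = "nat \<times> bool"

definition alphabet :: "nat \<Rightarrow> letter set" where
  "alphabet k = {(i, b). i < k}"

definition inv_letter :: "letter \<Rightarrow> letter" where
  "inv_letter a = (fst a, \<not> snd a)"

definition reduced :: "letter list \<Rightarrow> bool" where
  "reduced w \<longleftrightarrow> (\<forall>i. Suc i < length w \<longrightarrow> w ! Suc i \<noteq> inv_letter (w ! i))"

definition cyclically_reduced :: "letter list \<Rightarrow> bool" where
  "cyclically_reduced w \<longleftrightarrow> reduced w \<and> (w \<noteq> [] \<longrightarrow> last w \<noteq> inv_letter (hd w))"

definition CR :: "nat \<Rightarrow> letter list set" where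
  "CR k = {w \<in> lists (alphabet k). cyclically_reduced w}"

definition gamma :: "nat \<Rightarrow> letter list set \<Rightarrow> nat" where
  "gamma n S = card {x \<in> S. length x = n}"

definition kolmogorov :: "(bool list \<Rightarrow> bool list option) \<Rightarrow> bool list \<Rightarrow> nat" where
  "kolmogorov phi x = (LEAST n. \<exists>p. length p = n \<and> phi p = Some x)"

definition kolmogorov_2k :: "(bool list \<Rightarrow> bool list option) \<Rightarrow> (letter list \<Rightarrow> bool list)
    \<Rightarrow> letter list \<Rightarrow> nat" where
  "kolmogorov_2k phi h x = kolmogorov phi (h x)"

end

theory Submission
  imports Defs
begin

text \<open>
  A word of Kolmogorov complexity below t has a shortest program of length below t, and
  distinct words have distinct shortest programs, so at most 2 powr (t + 1) words are
  that compressible. With the threshold of the theorem, t + 1 = 1 - c/2 + n log2 (2k - 1) / 2,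
  so at most 2 powr (1 - c/2) * sqrt (2k - 1) ^ n cyclically reduced words of length n fall
  outside Z. On the other hand all k ^ n positive words of length n are cyclically reduced,
  and sqrt (2k - 1) < k, so for large n the exceptional words are at most a 2 powr (-c)
  fraction of all cyclically reduced words.
\<close>

lemma card_bool_lists_shorter: "card {p :: bool list. length p < L} = 2 ^ L - 1"
proof -
  let ?W = "\<lambda>i. {p :: bool list. set p \<subseteq> UNIV \<and> length p = i}"
  have "finite (?W i)" for i
    by (rule finite_lists_length_eq) simp
  then have "card (\<Union>i<L. ?W i) = (\<Sum>i<L. card (?W i))"
    by (intro card_UN_disjoint) auto
  moreover have "{p :: bool list. length p < L} = (\<Union>i<L. ?W i)"
    by auto
  ultimately have "card {p :: bool list. length p < L} = (\<Sum>i<L. card (?W i))"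
    by simp
  also have "\<dots> = (\<Sum>i<L. 2 ^ i)"
    using card_lists_length_eq[of "UNIV :: bool set"] by (simp add: card_UNIV_bool)
  finally show ?thesis
    using sum_power2[of L] by (simp add: atLeast0LessThan)
qed

lemma kolmogorov_witness:
  assumes "\<exists>p. phi p = Some y"
  shows "\<exists>p. length p = kolmogorov phi y \<and> phi p = Some y"
proof -
  from assms have "\<exists>n p. length p = n \<and> phi p = Some y" by blast
  then show ?thesis unfolding kolmogorov_def by (rule LeastI_ex)
qed

lemma
  assumes "\<forall>y. \<exists>p. phi p = Some y"
  shows finite_kolmogorov_less: "finite {y. kolmogorov phi y < L}"
    and card_kolmogorov_less: "card {y. kolmogorov phi y < L} < 2 ^ L"
proof -
  define prog where "prog y = (SOME p. length p = kolmogorov phi y \<and> phi p = Some y)" for y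
  have prog: "length (prog y) = kolmogorov phi y" "phi (prog y) = Some y" for y
    using someI_ex[OF kolmogorov_witness[of phi y]] assms unfolding prog_def by auto
  have inj: "inj_on prog {y. kolmogorov phi y < L}"
    by (metis inj_onI option.inject prog(2))
  have short: "prog ` {y. kolmogorov phi y < L} \<subseteq> {p. length p < L}"
    using prog(1) by auto
  have "{p :: bool list. length p < L} \<subseteq> {p. set p \<subseteq> UNIV \<and> length p \<le> L}"
    by auto
  then have fin: "finite {p :: bool list. length p < L}"
    using finite_lists_length_le[OF finite_UNIV] by (rule finite_subset)
  show "finite {y. kolmogorov phi y < L}"
    using inj short fin by (rule inj_on_finite)
  have "card {y. kolmogorov phi y < L} \<le> card {p :: bool list. length p < L}"
    using inj short fin by (rule card_inj_on_le)
  then show "card {y. kolmogorov phi y < L} < 2 ^ L"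
    using card_bool_lists_shorter[of L] zero_less_power[of "2 :: nat" L] by linarith
qed

lemma card_kolmogorov_2k_less:
  assumes "\<forall>y. \<exists>p. phi p = Some y" and "inj_on h A"
  shows "real (card {x \<in> A. real (kolmogorov_2k phi h x) < t}) \<le> 2 powr (t + 1)"
proof (cases "t \<le> 0")
  case True
  then have "{x \<in> A. real (kolmogorov_2k phi h x) < t} = {}"
    by auto
  then show ?thesis
    by (metis card.empty of_nat_0 powr_ge_zero)
next
  case False
  define L where "L = nat \<lceil>t\<rceil>"
  have below_iff: "real m < t \<longleftrightarrow> m < L" for m
    unfolding L_def using False by linarith
  have "inj_on h {x \<in> A. kolmogorov_2k phi h x < L}"
    using assms(2) by (rule inj_on_subset) auto
  moreover have "h ` {x \<in> A. kolmogorov_2k phi h x < L} \<subseteq> {y. kolmogorov phi y < L}"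
    unfolding kolmogorov_2k_def by auto
  ultimately have "card {x \<in> A. kolmogorov_2k phi h x < L} \<le> card {y. kolmogorov phi y < L}"
    using finite_kolmogorov_less[OF assms(1)] by (rule card_inj_on_le)
  also have "\<dots> < 2 ^ L"
    using assms(1) by (rule card_kolmogorov_less)
  finally have "real (card {x \<in> A. real (kolmogorov_2k phi h x) < t}) \<le> 2 ^ L"
    unfolding below_iff by simp
  also have "(2 :: real) ^ L \<le> 2 powr (t + 1)"
    using False by (simp add: L_def powr_realpow[symmetric])
  finally show ?thesis .
qed

lemma positive_word_cyclically_reduced:
  assumes "\<forall>a \<in> set w. snd a"
  shows "cyclically_reduced w"
proof -
  have no_inverse: "b \<noteq> inv_letter a" if "a \<in> set w" "b \<in> set w" for a b
    using assms that unfolding inv_letter_def by (metis snd_conv)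
  have "reduced w"
    unfolding reduced_def using no_inverse by (blast dest: Suc_lessD intro: nth_mem)
  moreover have "w \<noteq> [] \<Longrightarrow> last w \<noteq> inv_letter (hd w)"
    using no_inverse by (metis hd_in_set last_in_set)
  ultimately show ?thesis
    unfolding cyclically_reduced_def by blast
qed

lemma finite_alphabet: "finite (alphabet k)"
proof -
  have "alphabet k = {..<k} \<times> UNIV"
    unfolding alphabet_def by auto
  then show ?thesis
    by simp
qed

lemma finite_CR_length: "finite {x \<in> CR k. length x = n}"
proof (rule finite_subset)
  show "{x \<in> CR k. length x = n} \<subseteq> {x. set x \<subseteq> alphabet k \<and> length x = n}"
    unfolding CR_def by auto
  show "finite {x. set x \<subseteq> alphabet k \<and> length x = n}"
    using finite_alphabet by (rule finite_lists_length_eq)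
qed

lemma power_le_gamma_CR: "k ^ n \<le> gamma n (CR k)"
proof -
  define P where "P = (\<lambda>i. (i, True)) ` {..<k}"
  have "card P = k"
    unfolding P_def by (simp add: card_image inj_on_def)
  have "x \<in> CR k" if "set x \<subseteq> P" for x
  proof -
    have "\<forall>a \<in> set x. snd a" and "set x \<subseteq> alphabet k"
      using that unfolding P_def alphabet_def by auto
    then show ?thesis
      unfolding CR_def lists_eq_set by (simp add: positive_word_cyclically_reduced)
  qed
  then have "{x. set x \<subseteq> P \<and> length x = n} \<subseteq> {x \<in> CR k. length x = n}"
    by blast
  then have "card {x. set x \<subseteq> P \<and> length x = n} \<le> gamma n (CR k)"
    unfolding gamma_def using finite_CR_length by (rule card_mono[rotated])
  moreover have "card {x. set x \<subseteq> P \<and> length x = n} = k ^ n"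
    using \<open>card P = k\<close> unfolding P_def by (simp add: card_lists_length_eq)
  ultimately show ?thesis
    by simp
qed

lemma sqrt_two_mul_minus_one_less:
  fixes x :: real
  assumes "0 \<le> x" and "x \<noteq> 1"
  shows "sqrt (2 * x - 1) < x"
proof -
  have "0 < (x - 1)\<^sup>2"
    using assms(2) by simp
  then have "2 * x - 1 < x\<^sup>2"
    by (simp add: power2_diff)
  then have "sqrt (2 * x - 1) < sqrt (x\<^sup>2)"
    by (simp only: real_sqrt_less_iff)
  then show ?thesis
    using assms(1) by simp
qed

lemma powr_half_log:
  fixes b y :: real
  assumes "0 < b" "b \<noteq> 1" "0 < y"
  shows "b powr (real n * log b y / 2) = sqrt y ^ n"
proof -
  have "b powr (real n * log b y / 2) = ((b powr log b y) powr (1 / 2)) powr real n"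
    by (simp add: powr_powr ac_simps)
  also have "\<dots> = sqrt y ^ n"
    using assms by (simp add: powr_half_sqrt powr_realpow)
  finally show ?thesis .
qed

lemma eventually_mult_power_le:
  fixes a b C D :: real
  assumes "0 \<le> a" "a < b" "0 < D"
  shows "eventually (\<lambda>n. C * a ^ n \<le> D * b ^ n) sequentially"
proof -
  have "(\<lambda>n. \<bar>C\<bar> * (a / b) ^ n) \<longlonglongrightarrow> 0"
    using assms by (intro tendsto_mult_right_zero LIMSEQ_power_zero) simp
  then have "eventually (\<lambda>n. \<bar>C\<bar> * (a / b) ^ n < D) sequentially"
    using assms(3) by (rule order_tendstoD)
  then have "eventually (\<lambda>n. \<bar>C\<bar> * (a / b) ^ n \<le> D) sequentially"
    by (rule eventually_mono) simp
  then show ?thesis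
  proof (rule eventually_mono)
    fix n assume "\<bar>C\<bar> * (a / b) ^ n \<le> D"
    then have "\<bar>C\<bar> * a ^ n \<le> D * b ^ n"
      using assms by (simp add: power_divide field_simps)
    moreover have "C * a ^ n \<le> \<bar>C\<bar> * a ^ n"
      using assms(1) by (intro mult_right_mono) auto
    ultimately show "C * a ^ n \<le> D * b ^ n"
      by linarith
  qed
qed

lemma card_CR_compressible_le:
  assumes "k > 1" and "\<forall>y. \<exists>p. phi p = Some y" and "inj_on h (CR k)"
  shows "real (card {x \<in> CR k. length x = n \<and>
      real (kolmogorov_2k phi h x) < - c / 2 + real n * log 2 (2 * real k - 1) / 2})
    \<le> 2 powr (1 - c / 2) * sqrt (2 * real k - 1) ^ n"
proof -
  let ?t = "- c / 2 + real n * log 2 (2 * real k - 1) / 2"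
  have set_eq: "{x \<in> CR k. length x = n \<and> real (kolmogorov_2k phi h x) < ?t}
      = {x \<in> {x \<in> CR k. length x = n}. real (kolmogorov_2k phi h x) < ?t}"
    by auto
  have "inj_on h {x \<in> CR k. length x = n}"
    using assms(3) by (rule inj_on_subset) auto
  then have "real (card {x \<in> CR k. length x = n \<and> real (kolmogorov_2k phi h x) < ?t})
      \<le> 2 powr (?t + 1)"
    unfolding set_eq using assms(2) by (intro card_kolmogorov_2k_less)
  also have "2 powr (?t + 1) = 2 powr (1 - c / 2) * 2 powr (real n * log 2 (2 * real k - 1) / 2)"
    by (simp add: powr_add[symmetric] algebra_simps)
  also have "\<dots> = 2 powr (1 - c / 2) * sqrt (2 * real k - 1) ^ n"
    using assms(1) by (simp add: powr_half_log)
  finally show ?thesis .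
qed

lemma gamma_ratio_ge:
  assumes "Z \<subseteq> S" and "finite {x \<in> S. length x = n}" and "0 < gamma n S"
    and "real (card ({x \<in> S. length x = n} - Z)) \<le> e * real (gamma n S)"
  shows "1 - e \<le> real (gamma n Z) / real (gamma n S)"
proof -
  define G where "G = real (gamma n S)"
  define B where "B = real (card ({x \<in> S. length x = n} - Z))"
  have "{x \<in> S. length x = n} = {x \<in> Z. length x = n} \<union> ({x \<in> S. length x = n} - Z)"
    using assms(1) by auto
  moreover have "finite {x \<in> Z. length x = n}"
    using assms(2) by (rule finite_subset[rotated]) (use assms(1) in auto)
  ultimately have "gamma n S = gamma n Z + card ({x \<in> S. length x = n} - Z)"
    unfolding gamma_def using assms(2) by (subst card_Un_disjoint[symmetric]) auto
  then have "real (gamma n Z) = G - B"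
    unfolding G_def B_def by simp
  then have "real (gamma n Z) / G = 1 - B / G"
    using assms(3) unfolding G_def by (simp add: diff_divide_distrib)
  moreover have "B / G \<le> e"
    using assms(3,4) unfolding G_def B_def by (simp add: divide_le_eq)
  ultimately show ?thesis
    unfolding G_def by simp
qed

theorem proposition3p3:
  fixes k :: nat and c :: real
    and phi :: "bool list \<Rightarrow> bool list option"
    and h :: "letter list \<Rightarrow> bool list"
    and Z :: "letter list set"
  assumes "k > 1"
    and "\<forall>x. \<exists>p. phi p = Some x"
    and "bij_betw h (lists (alphabet k)) UNIV"
    and "c \<ge> 1"
    and "Z = {x \<in> CR k. real (kolmogorov_2k phi h x)
                 \<ge> - c / 2 + real (length x) * log 2 (2 * real k - 1) / 2}"
  shows "\<exists>n0 :: nat. n0 > 1 \<and> (\<forall>n \<ge> n0.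
           real (gamma n Z) / real (gamma n (CR k)) \<ge> 1 - 1 / 2 powr c)"
proof -
  define s where "s = sqrt (2 * real k - 1)"
  have inj: "inj_on h (CR k)"
    using bij_betw_imp_inj_on[OF assms(3)] by (rule inj_on_subset) (auto simp: CR_def)
  have "s < real k"
    unfolding s_def using assms(1) by (intro sqrt_two_mul_minus_one_less) auto
  then have "eventually (\<lambda>n. 2 powr (1 - c / 2) * s ^ n \<le> 2 powr (- c) * real k ^ n) sequentially"
    unfolding s_def using assms(1) by (intro eventually_mult_power_le) auto
  then obtain N where N: "\<And>n. n \<ge> N \<Longrightarrow> 2 powr (1 - c / 2) * s ^ n \<le> 2 powr (- c) * real k ^ n"
    unfolding eventually_sequentially by blast
  have "1 - 2 powr (- c) \<le> real (gamma n Z) / real (gamma n (CR k))" if "n \<ge> N" for n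
  proof (rule gamma_ratio_ge[OF _ finite_CR_length])
    show "Z \<subseteq> CR k"
      using assms(5) by blast
    have "0 < k ^ n"
      using assms(1) by simp
    then show "0 < gamma n (CR k)"
      using power_le_gamma_CR[of k n] by linarith
    have exceptional: "{x \<in> CR k. length x = n} - Z = {x \<in> CR k. length x = n \<and>
        real (kolmogorov_2k phi h x) < - c / 2 + real n * log 2 (2 * real k - 1) / 2}"
      unfolding assms(5) by (auto simp: not_le)
    have "real (card ({x \<in> CR k. length x = n} - Z)) \<le> 2 powr (1 - c / 2) * s ^ n"
      unfolding exceptional s_def by (rule card_CR_compressible_le[OF assms(1,2) inj])
    also have "\<dots> \<le> 2 powr (- c) * real k ^ n"
      using that by (rule N)
    also have "\<dots> \<le> 2 powr (- c) * real (gamma n (CR k))"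
      by (intro mult_left_mono) (metis of_nat_le_iff of_nat_power power_le_gamma_CR, simp)
    finally show "real (card ({x \<in> CR k. length x = n} - Z)) \<le> 2 powr (- c) * real (gamma n (CR k))" .
  qed
  then show ?thesis
    by (intro exI[of _ "max 2 N"]) (simp add: powr_minus_divide)
qed

end
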